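(* For all $A\subseteq E$, $\Lambda(A,P)\le\bar\Lambda(A,P)\le(b+1)\cdot\Lambda(A,P)$, where $b=\max_i|E_2\cap p_i|$ is the maximum number of edges that a user path shares with other user paths.
   Context: $G=(V,E)$ is a simple directed acyclic graph with capacities $C\in\mathbb{R}_{\ge0}^E$ and $\gamma$ is a budget with $0<\gamma\le\min_eC(e)$. User paths $P=\{p_1,\dots,p_k\}$ are directed paths (edge sets, not necessarily disjoint) with initial values $\lambda_i\ge0$, $\sum_{i:e\in p_i}\lambda_i\le C(e)$ for all $e$. For $A\subseteq E$ let $\tilde C_A(e)=C(e)-\gamma\mathbf{1}_{\{e\in A\}}$; $T(A,P)$ is the optimal value of: maximize $\sum_i\tilde\lambda_i$ s.t. $\sum_{i:e\in p_i}\tilde\lambda_i\le\tilde C_A(e)$ for all $e$, $0\le\tilde\lambda_i\le\lambda_i$; $\Lambda(A,P)=\sum_i\lambda_i-T(A,P)$. Let $E_1$ be the set of edges lying on exactly one user path and $E_2$ those lying on at least two. Define $\tilde\lambda^{(1)}_{iA}=\min\big(\lambda_i,\min_{e\in p_i\cap E_1}\tilde C_A(e)\big)$, $\tilde\lambda^{(2)}_{iA}=\tilde\lambda^{(1)}_{iA}\cdot\prod_{e\in p_i\cap E_2,\ \tilde C_A(e)\le\sum_{j:e\in p_j}\lambda_j}\frac{\tilde C_A(e)}{\sum_{j:e\in p_j}\lambda_j}$, and $\bar\Lambda(A,P)=\sum_i\lambda_i-\sum_i\tilde\lambda^{(2)}_{iA}$. *)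

theory Defs
  imports Main Complex_Main
begin

definition simple_dag :: "('v \<times> 'v) set \<Rightarrow> bool" where
  "simple_dag E \<longleftrightarrow> finite E \<and> (\<forall>v. (v, v) \<notin> E) \<and> acyclic E"

definition is_path_edges :: "('v \<times> 'v) set \<Rightarrow> ('v \<times> 'v) set \<Rightarrow> bool" where
  "is_path_edges E p \<longleftrightarrow> (\<exists>vs. vs \<noteq> [] \<and> distinct vs \<and>
      p = set (zip vs (tl vs)) \<and> p \<subseteq> E)"

definition Ctil :: "('e \<Rightarrow> real) \<Rightarrow> real \<Rightarrow> 'e set \<Rightarrow> 'e \<Rightarrow> real" where
  "Ctil C \<gamma> A e = C e - (if e \<in> A then \<gamma> else 0)"

definition load :: "nat \<Rightarrow> (nat \<Rightarrow> 'e set) \<Rightarrow> (nat \<Rightarrow> real) \<Rightarrow> 'e \<Rightarrow> real" where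
  "load k p lam e = (\<Sum>j | j < k \<and> e \<in> p j. lam j)"

definition Topt :: "'e set \<Rightarrow> ('e \<Rightarrow> real) \<Rightarrow> real \<Rightarrow> nat \<Rightarrow> (nat \<Rightarrow> 'e set)
    \<Rightarrow> (nat \<Rightarrow> real) \<Rightarrow> 'e set \<Rightarrow> real" where
  "Topt E C \<gamma> k p lam A = Sup {(\<Sum>i<k. x i) | x.
      (\<forall>e\<in>E. (\<Sum>i | i < k \<and> e \<in> p i. x i) \<le> Ctil C \<gamma> A e) \<and>
      (\<forall>i<k. 0 \<le> x i \<and> x i \<le> lam i)}"

definition Lam :: "'e set \<Rightarrow> ('e \<Rightarrow> real) \<Rightarrow> real \<Rightarrow> nat \<Rightarrow> (nat \<Rightarrow> 'e set)
    \<Rightarrow> (nat \<Rightarrow> real) \<Rightarrow> 'e set \<Rightarrow> real" where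
  "Lam E C \<gamma> k p lam A = (\<Sum>i<k. lam i) - Topt E C \<gamma> k p lam A"

definition E1 :: "'e set \<Rightarrow> nat \<Rightarrow> (nat \<Rightarrow> 'e set) \<Rightarrow> 'e set" where
  "E1 E k p = {e \<in> E. card {i. i < k \<and> e \<in> p i} = 1}"

definition E2 :: "'e set \<Rightarrow> nat \<Rightarrow> (nat \<Rightarrow> 'e set) \<Rightarrow> 'e set" where
  "E2 E k p = {e \<in> E. card {i. i < k \<and> e \<in> p i} \<ge> 2}"

text \<open>lambda-tilde^(1): the inner minimum over an empty set is read as +infinity.\<close>
definition lam1 :: "'e set \<Rightarrow> ('e \<Rightarrow> real) \<Rightarrow> real \<Rightarrow> nat \<Rightarrow> (nat \<Rightarrow> 'e set)
    \<Rightarrow> (nat \<Rightarrow> real) \<Rightarrow> 'e set \<Rightarrow> nat \<Rightarrow> real" where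
  "lam1 E C \<gamma> k p lam A i =
     (if p i \<inter> E1 E k p = {} then lam i
      else min (lam i) (Min (Ctil C \<gamma> A ` (p i \<inter> E1 E k p))))"

definition lam2 :: "'e set \<Rightarrow> ('e \<Rightarrow> real) \<Rightarrow> real \<Rightarrow> nat \<Rightarrow> (nat \<Rightarrow> 'e set)
    \<Rightarrow> (nat \<Rightarrow> real) \<Rightarrow> 'e set \<Rightarrow> nat \<Rightarrow> real" where
  "lam2 E C \<gamma> k p lam A i = lam1 E C \<gamma> k p lam A i *
     (\<Prod>e \<in> {e \<in> p i \<inter> E2 E k p. Ctil C \<gamma> A e \<le> load k p lam e}.
        Ctil C \<gamma> A e / load k p lam e)"

definition Lambar :: "'e set \<Rightarrow> ('e \<Rightarrow> real) \<Rightarrow> real \<Rightarrow> nat \<Rightarrow> (nat \<Rightarrow> 'e set)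
    \<Rightarrow> (nat \<Rightarrow> real) \<Rightarrow> 'e set \<Rightarrow> real" where
  "Lambar E C \<gamma> k p lam A = (\<Sum>i<k. lam i) - (\<Sum>i<k. lam2 E C \<gamma> k p lam A i)"

text \<open>b = max_i |E_2 \<inter> p_i| (taken to be 0 when there are no user paths).\<close>
definition bmax :: "'e set \<Rightarrow> nat \<Rightarrow> (nat \<Rightarrow> 'e set) \<Rightarrow> nat" where
  "bmax E k p = Max (insert 0 ((\<lambda>i. card (E2 E k p \<inter> p i)) ` {..<k}))"

end

theory Submission
  imports Defs
begin

text \<open>The vector \<open>lam2\<close> is feasible for the linear program, which gives the first
  inequality. For the second, compare \<open>lam2\<close> with an arbitrary feasible \<open>x\<close>. Single-user
  edges force \<open>x i \<le> lam1 i\<close>, and by \<open>1 - \<Prod>f \<le> \<Sum>(1 - f)\<close> the loss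
  \<open>lam1 i - lam2 i\<close> is at most \<open>lam i\<close> times the sum of \<open>1 - C\<^sub>A(e) / load(e)\<close> over the
  congested shared edges \<open>e\<close> of \<open>p i\<close>. Summed over the users of such an \<open>e\<close> this gives
  \<open>load(e) - C\<^sub>A(e)\<close>, which is at most the loss \<open>\<Sum>(lam i - x i)\<close> of \<open>x\<close> on these users;
  exchanging the order of summation, each user is charged at most \<open>b\<close> times.\<close>

lemma one_minus_prod_le_sum:
  fixes f :: "'a \<Rightarrow> real"
  assumes "finite S" "\<And>e. e \<in> S \<Longrightarrow> 0 \<le> f e \<and> f e \<le> 1"
  shows "1 - prod f S \<le> (\<Sum>e\<in>S. 1 - f e)"
  using assms
proof (induction S rule: finite_induct)
  case empty
  then show ?case by simp
next
  case (insert a S)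
  have P: "0 \<le> prod f S" "prod f S \<le> 1"
    using insert by (auto intro: prod_nonneg prod_le_1)
  have fa: "0 \<le> f a" "f a \<le> 1" using insert by auto
  have "1 - prod f (insert a S) = (1 - f a) + f a * (1 - prod f S)"
    using insert by (simp add: algebra_simps)
  also have "\<dots> \<le> (1 - f a) + (1 - prod f S)"
    using P fa mult_left_le_one_le[of "1 - prod f S" "f a"] by simp
  also have "\<dots> \<le> (1 - f a) + (\<Sum>e\<in>S. 1 - f e)" using insert by simp
  finally show ?case using insert by simp
qed

definition users :: "nat \<Rightarrow> (nat \<Rightarrow> 'e set) \<Rightarrow> 'e \<Rightarrow> nat set" where
  "users k p e = {i. i < k \<and> e \<in> p i}"

lemma finite_users [simp]: "finite (users k p e)"
  unfolding users_def by (rule finite_subset[of _ "{..<k}"]) auto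

lemma load_eq_sum_users: "load k p lam e = sum lam (users k p e)"
  unfolding load_def users_def ..

lemma sum_paths_swap:
  assumes "finite F"
  shows "(\<Sum>i<k. \<Sum>e\<in>p i \<inter> F. g i e) = (\<Sum>e\<in>F. \<Sum>i\<in>users k p e. g i e)"
proof -
  have "(\<Sum>i<k. \<Sum>e\<in>p i \<inter> F. g i e) = (\<Sum>i\<in>{..<k}. \<Sum>e\<in>{e. e \<in> F \<and> e \<in> p i}. g i e)"
    by (intro sum.cong) auto
  also have "\<dots> = (\<Sum>e\<in>F. \<Sum>i\<in>{i. i \<in> {..<k} \<and> e \<in> p i}. g i e)"
    using assms by (intro sum.swap_restrict) auto
  finally show ?thesis by (simp add: users_def)
qed

lemma users_E1_eq:
  assumes "e \<in> E1 E k p" "i < k" "e \<in> p i"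
  shows "users k p e = {i}"
proof -
  obtain j where "users k p e = {j}"
    using assms(1) by (auto simp: E1_def users_def card_1_singleton_iff)
  moreover have "i \<in> users k p e" using assms(2,3) by (simp add: users_def)
  ultimately show ?thesis by simp
qed

lemma E2_if_not_E1:
  assumes "e \<in> E" "e \<notin> E1 E k p" "users k p e \<noteq> {}"
  shows "e \<in> E2 E k p"
proof -
  have "card (users k p e) \<noteq> 0" using assms(3) by simp
  moreover have "card (users k p e) \<noteq> 1" using assms(1,2) by (simp add: E1_def users_def)
  ultimately have "2 \<le> card (users k p e)" by linarith
  then show ?thesis using assms(1) by (simp add: E2_def users_def)
qed

definition lp_feasible :: "'e set \<Rightarrow> ('e \<Rightarrow> real) \<Rightarrow> real \<Rightarrow> nat \<Rightarrow> (nat \<Rightarrow> 'e set)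
    \<Rightarrow> (nat \<Rightarrow> real) \<Rightarrow> 'e set \<Rightarrow> (nat \<Rightarrow> real) \<Rightarrow> bool" where
  "lp_feasible E C \<gamma> k p lam A x \<longleftrightarrow>
     (\<forall>e\<in>E. sum x (users k p e) \<le> Ctil C \<gamma> A e) \<and> (\<forall>i<k. 0 \<le> x i \<and> x i \<le> lam i)"

lemma Topt_eq_Sup_feasible:
  "Topt E C \<gamma> k p lam A = Sup {sum x {..<k} | x. lp_feasible E C \<gamma> k p lam A x}"
  unfolding Topt_def lp_feasible_def users_def ..

lemma Topt_ge_feasible:
  assumes "lp_feasible E C \<gamma> k p lam A x"
  shows "sum x {..<k} \<le> Topt E C \<gamma> k p lam A"
  unfolding Topt_eq_Sup_feasible
proof (rule cSup_upper)
  show "bdd_above {sum x {..<k} | x. lp_feasible E C \<gamma> k p lam A x}"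
    by (rule bdd_aboveI[of _ "sum lam {..<k}"]) (auto simp: lp_feasible_def intro: sum_mono)
qed (use assms in blast)

lemma Topt_le:
  assumes "lp_feasible E C \<gamma> k p lam A x\<^sub>0"
    and "\<And>x. lp_feasible E C \<gamma> k p lam A x \<Longrightarrow> sum x {..<k} \<le> B"
  shows "Topt E C \<gamma> k p lam A \<le> B"
  unfolding Topt_eq_Sup_feasible using assms by (intro cSup_least) auto

locale reduced_network =
  fixes E :: "'e set" and C :: "'e \<Rightarrow> real" and \<gamma> :: real and k :: nat
    and p :: "nat \<Rightarrow> 'e set" and lam :: "nat \<Rightarrow> real" and A :: "'e set"
  assumes finite_edges: "finite E"
    and paths_subset: "\<And>i. i < k \<Longrightarrow> p i \<subseteq> E"
    and Ctil_nonneg: "\<And>e. e \<in> E \<Longrightarrow> 0 \<le> Ctil C \<gamma> A e"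
    and lam_nonneg: "\<And>i. i < k \<Longrightarrow> 0 \<le> lam i"
begin

abbreviation "Ct \<equiv> Ctil C \<gamma> A"
abbreviation "L \<equiv> load k p lam"
abbreviation "feasible \<equiv> lp_feasible E C \<gamma> k p lam A"
abbreviation "l1 \<equiv> lam1 E C \<gamma> k p lam A"
abbreviation "l2 \<equiv> lam2 E C \<gamma> k p lam A"

definition congested :: "'e set" where
  "congested = {e \<in> E2 E k p. Ct e \<le> L e}"

definition scale :: "'e \<Rightarrow> real" where
  "scale e = Ct e / L e"

lemma finite_path: "i < k \<Longrightarrow> finite (p i)"
  using finite_subset[OF paths_subset finite_edges] .

lemma congested_subset: "congested \<subseteq> E"
  unfolding congested_def E2_def by auto

lemma finite_congested: "finite congested"
  using finite_subset[OF congested_subset finite_edges] .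

lemma load_nonneg: "0 \<le> L e"
  unfolding load_eq_sum_users users_def using lam_nonneg by (auto intro: sum_nonneg)

lemma scale_bounds: "e \<in> congested \<Longrightarrow> 0 \<le> scale e \<and> scale e \<le> 1"
  using Ctil_nonneg congested_subset load_nonneg[of e]
  unfolding congested_def scale_def by (auto simp: divide_le_eq_1)

lemma prod_scale_bounds:
  "S \<subseteq> congested \<Longrightarrow> 0 \<le> prod scale S \<and> prod scale S \<le> 1"
  using scale_bounds by (auto intro: prod_nonneg prod_le_1)

lemma zero_feasible: "feasible (\<lambda>_. 0)"
  unfolding lp_feasible_def using Ctil_nonneg lam_nonneg by auto

lemma lam1_le_lam: "l1 i \<le> lam i"
  unfolding lam1_def by auto

lemma lam1_le_Ctil:
  assumes "i < k" "e \<in> p i \<inter> E1 E k p"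
  shows "l1 i \<le> Ct e"
proof -
  have "Min (Ct ` (p i \<inter> E1 E k p)) \<le> Ct e"
    using assms finite_path[OF assms(1)] by (intro Min_le) auto
  then show ?thesis using assms(2) unfolding lam1_def by auto
qed

lemma le_lam1:
  assumes "i < k" "y \<le> lam i" "\<And>e. e \<in> p i \<inter> E1 E k p \<Longrightarrow> y \<le> Ct e"
  shows "y \<le> l1 i"
  using assms finite_path[OF assms(1)] unfolding lam1_def by (auto simp: Min_ge_iff)

lemma lam1_nonneg: "i < k \<Longrightarrow> 0 \<le> l1 i"
  using le_lam1 lam_nonneg Ctil_nonneg paths_subset by blast

lemma feasible_le_lam1:
  assumes "feasible x" "i < k"
  shows "x i \<le> l1 i"
proof (rule le_lam1)
  fix e assume e: "e \<in> p i \<inter> E1 E k p"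
  then have "users k p e = {i}" "e \<in> E"
    using users_E1_eq[of e _ k p i] assms(2) by (auto simp: E1_def)
  then show "x i \<le> Ct e" using assms(1) by (auto simp: lp_feasible_def)
qed (use assms in \<open>auto simp: lp_feasible_def\<close>)

lemma lam2_eq: "l2 i = l1 i * prod scale (p i \<inter> congested)"
proof -
  have "{e \<in> p i \<inter> E2 E k p. Ct e \<le> L e} = p i \<inter> congested"
    unfolding congested_def by auto
  then show ?thesis unfolding lam2_def scale_def by simp
qed

lemma lam2_nonneg: "i < k \<Longrightarrow> 0 \<le> l2 i"
  using lam1_nonneg prod_scale_bounds[of "p i \<inter> congested"] by (simp add: lam2_eq)

lemma lam2_le_lam1: "i < k \<Longrightarrow> l2 i \<le> l1 i"
  using lam1_nonneg prod_scale_bounds[of "p i \<inter> congested"]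
  by (simp add: lam2_eq mult_left_le)

lemma lam2_le_lam: "i < k \<Longrightarrow> l2 i \<le> lam i"
  using lam2_le_lam1 lam1_le_lam order_trans by blast

lemma lam2_le_scaled:
  assumes i: "i < k" "e \<in> p i" and e: "e \<in> congested"
  shows "l2 i \<le> lam i * scale e"
proof -
  have "l2 i = (l1 i * prod scale (p i \<inter> congested - {e})) * scale e"
    using assms finite_path[OF i(1)] by (simp add: lam2_eq prod.remove[of _ e])
  also have "\<dots> \<le> l1 i * scale e"
    using prod_scale_bounds[of "p i \<inter> congested - {e}"] lam1_nonneg[OF i(1)] scale_bounds[OF e]
    by (intro mult_right_mono mult_left_le) auto
  also have "\<dots> \<le> lam i * scale e"
    using lam1_le_lam scale_bounds[OF e] by (intro mult_right_mono) auto
  finally show ?thesis .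
qed

lemma sum_lam2_congested:
  assumes "e \<in> congested"
  shows "sum l2 (users k p e) \<le> Ct e"
proof -
  have "sum l2 (users k p e) \<le> (\<Sum>i\<in>users k p e. lam i * scale e)"
    using lam2_le_scaled assms by (intro sum_mono) (auto simp: users_def)
  also have "\<dots> = L e * scale e"
    by (simp add: load_eq_sum_users sum_distrib_right)
  also have "\<dots> \<le> Ct e"
    using Ctil_nonneg[of e] assms congested_subset by (auto simp: scale_def)
  finally show ?thesis .
qed

lemma sum_lam2_users_le:
  assumes e: "e \<in> E"
  shows "sum l2 (users k p e) \<le> Ct e"
proof (cases "L e < Ct e")
  case True
  have "sum l2 (users k p e) \<le> L e"
    unfolding load_eq_sum_users using lam2_le_lam by (intro sum_mono) (auto simp: users_def)
  then show ?thesis using True by simp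
next
  case not_slack: False
  show ?thesis
  proof (cases "users k p e = {}")
    case True
    then show ?thesis using Ctil_nonneg[OF e] by simp
  next
    case False
    then obtain i where i: "i < k" "e \<in> p i" by (auto simp: users_def)
    show ?thesis
    proof (cases "e \<in> E1 E k p")
      case True
      then have "sum l2 (users k p e) = l2 i" using users_E1_eq[OF True i] by simp
      also have "\<dots> \<le> l1 i" using lam2_le_lam1[OF i(1)] .
      also have "\<dots> \<le> Ct e" using lam1_le_Ctil i True by blast
      finally show ?thesis .
    next
      case not_E1: False
      then have "e \<in> congested"
        using E2_if_not_E1[OF e not_E1 False] not_slack by (simp add: congested_def)
      then show ?thesis by (rule sum_lam2_congested)
    qed
  qed
qed

lemma lam2_feasible: "feasible l2"
  using sum_lam2_users_le lam2_nonneg lam2_le_lam by (auto simp: lp_feasible_def)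

lemma lam_minus_lam2_le:
  assumes x: "feasible x" and i: "i < k"
  shows "lam i - l2 i \<le> (lam i - x i) + (\<Sum>e\<in>p i \<inter> congested. lam i * (1 - scale e))"
proof -
  have "l1 i - l2 i = l1 i * (1 - prod scale (p i \<inter> congested))"
    by (simp add: lam2_eq algebra_simps)
  also have "\<dots> \<le> l1 i * (\<Sum>e\<in>p i \<inter> congested. 1 - scale e)"
    using one_minus_prod_le_sum[of "p i \<inter> congested" scale] finite_path[OF i]
      scale_bounds lam1_nonneg[OF i]
    by (intro mult_left_mono) auto
  also have "\<dots> \<le> lam i * (\<Sum>e\<in>p i \<inter> congested. 1 - scale e)"
    using lam1_le_lam scale_bounds by (intro mult_right_mono sum_nonneg) auto
  finally show ?thesis
    using feasible_le_lam1[OF x i] by (simp add: sum_distrib_left)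
qed

lemma congestion_loss_le:
  assumes x: "feasible x" and e: "e \<in> congested"
  shows "L e * (1 - scale e) \<le> (\<Sum>i\<in>users k p e. lam i - x i)"
proof -
  have "e \<in> E" using e congested_subset by auto
  have "L e * (1 - scale e) = L e - Ct e"
  proof (cases "L e = 0")
    case True
    then show ?thesis using Ctil_nonneg[OF \<open>e \<in> E\<close>] e by (simp add: congested_def)
  qed (simp add: scale_def right_diff_distrib)
  also have "\<dots> \<le> (\<Sum>i\<in>users k p e. lam i - x i)"
    using x \<open>e \<in> E\<close> by (simp add: lp_feasible_def load_eq_sum_users sum_subtractf)
  finally show ?thesis .
qed

lemma card_path_congested_le_bmax:
  assumes i: "i < k"
  shows "card (p i \<inter> congested) \<le> bmax E k p"
proof -
  have "card (p i \<inter> congested) \<le> card (E2 E k p \<inter> p i)"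
    using finite_path[OF i] unfolding congested_def by (intro card_mono) auto
  also have "\<dots> \<le> bmax E k p"
    unfolding bmax_def using i by (intro Max_ge) auto
  finally show ?thesis .
qed

lemma lam2_loss_le:
  assumes x: "feasible x"
  shows "(\<Sum>i<k. lam i - l2 i) \<le> real (bmax E k p + 1) * (\<Sum>i<k. lam i - x i)"
proof -
  let ?b = "real (bmax E k p)"
  have "(\<Sum>i<k. lam i - l2 i)
      \<le> (\<Sum>i<k. (lam i - x i) + (\<Sum>e\<in>p i \<inter> congested. lam i * (1 - scale e)))"
    using lam_minus_lam2_le[OF x] by (intro sum_mono) auto
  also have "\<dots>
      = (\<Sum>i<k. lam i - x i) + (\<Sum>i<k. \<Sum>e\<in>p i \<inter> congested. lam i * (1 - scale e))"
    by (rule sum.distrib)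
  also have "(\<Sum>i<k. \<Sum>e\<in>p i \<inter> congested. lam i * (1 - scale e))
      = (\<Sum>e\<in>congested. L e * (1 - scale e))"
    by (simp add: sum_paths_swap finite_congested load_eq_sum_users sum_distrib_right)
  also have "\<dots> \<le> (\<Sum>e\<in>congested. \<Sum>i\<in>users k p e. lam i - x i)"
    using congestion_loss_le[OF x] by (rule sum_mono)
  also have "\<dots> = (\<Sum>i<k. (lam i - x i) * real (card (p i \<inter> congested)))"
    by (simp add: sum_paths_swap[symmetric] finite_congested mult.commute)
  also have "\<dots> \<le> (\<Sum>i<k. (lam i - x i) * ?b)"
    using x card_path_congested_le_bmax
    by (intro sum_mono mult_left_mono) (auto simp: lp_feasible_def)
  also have "\<dots> = (\<Sum>i<k. lam i - x i) * ?b"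
    by (rule sum_distrib_right[symmetric])
  finally show ?thesis
    by (simp add: algebra_simps)
qed

lemma Lam_le_Lambar: "Lam E C \<gamma> k p lam A \<le> Lambar E C \<gamma> k p lam A"
  using Topt_ge_feasible[OF lam2_feasible] by (simp add: Lam_def Lambar_def)

lemma Lambar_le_Lam:
  "Lambar E C \<gamma> k p lam A \<le> real (bmax E k p + 1) * Lam E C \<gamma> k p lam A"
proof -
  let ?c = "real (bmax E k p + 1)"
  have Lambar_eq: "Lambar E C \<gamma> k p lam A = (\<Sum>i<k. lam i - l2 i)"
    by (simp add: Lambar_def sum_subtractf)
  have "Topt E C \<gamma> k p lam A \<le> sum lam {..<k} - Lambar E C \<gamma> k p lam A / ?c"
  proof (rule Topt_le[OF zero_feasible])
    fix x assume "feasible x"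
    then have "Lambar E C \<gamma> k p lam A / ?c \<le> (\<Sum>i<k. lam i - x i)"
      unfolding Lambar_eq using lam2_loss_le by (simp add: pos_divide_le_eq mult.commute)
    then show "sum x {..<k} \<le> sum lam {..<k} - Lambar E C \<gamma> k p lam A / ?c"
      by (simp add: sum_subtractf)
  qed
  then have "Lambar E C \<gamma> k p lam A / ?c \<le> Lam E C \<gamma> k p lam A"
    by (simp add: Lam_def)
  then show ?thesis
    by (simp add: pos_divide_le_eq mult.commute)
qed

end

theorem lemma3:
  fixes E :: "('v \<times> 'v) set" and C :: "('v \<times> 'v) \<Rightarrow> real" and \<gamma> :: real
    and k :: nat and p :: "nat \<Rightarrow> ('v \<times> 'v) set" and lam :: "nat \<Rightarrow> real"
    and A :: "('v \<times> 'v) set"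
  assumes G: "simple_dag E"
    and Cnn: "\<forall>e\<in>E. 0 \<le> C e"
    and gpos: "0 < \<gamma>" and gle: "\<forall>e\<in>E. \<gamma> \<le> C e"
    and paths: "\<forall>i<k. is_path_edges E (p i)"
    and lamnn: "\<forall>i<k. 0 \<le> lam i"
    and lamcap: "\<forall>e\<in>E. load k p lam e \<le> C e"
    and AE: "A \<subseteq> E"
  shows "Lam E C \<gamma> k p lam A \<le> Lambar E C \<gamma> k p lam A \<and>
         Lambar E C \<gamma> k p lam A \<le> real (bmax E k p + 1) * Lam E C \<gamma> k p lam A"
proof -
  interpret reduced_network E C \<gamma> k p lam A
  proof
    show "finite E" using G by (simp add: simple_dag_def)
    show "\<And>i. i < k \<Longrightarrow> p i \<subseteq> E" using paths by (auto simp: is_path_edges_def)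
    show "\<And>e. e \<in> E \<Longrightarrow> 0 \<le> Ctil C \<gamma> A e" using Cnn gle by (auto simp: Ctil_def)
    show "\<And>i. i < k \<Longrightarrow> 0 \<le> lam i" using lamnn by auto
  qed
  show ?thesis using Lam_le_Lambar Lambar_le_Lam by blast
qed

end
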